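(* Let $k\ge 2$, $X_1,\dots,X_k\in\mathcal{M}_d$ and $S\subseteq\{1,\dots,k\}$. For $i\in\{1,\dots,k\}$ put $X_i'=X_i^T$ if $i\in S$ and $X_i'=X_i$ if $i\notin S$, and put $Y_i=X_i$ if $i\in S$ and $Y_i=X_i^T$ if $i\notin S$. Then $$\operatorname{tr}_{\{1,\dots,k\}\setminus\{k\}}\big[(k\,k\!-\!1\cdots1)^{T_S}(X_1\otimes\cdots\otimes X_k)\big]=\begin{cases}X_1'X_2'\cdots X_{k-1}'X_k & k\notin S,\\ Y_{k-1}Y_{k-2}\cdots Y_1X_k & k\in S.\end{cases}$$
   Context: $\mathcal{M}_d$ denotes complex $d\times d$ matrices. A permutation $\sigma\in S_k$ acts on $(\mathbb{C}^d)^{\otimes k}$ by $\sigma|v_1\rangle\otimes\cdots\otimes|v_k\rangle=|v_{\sigma^{-1}(1)}\rangle\otimes\cdots\otimes|v_{\sigma^{-1}(k)}\rangle$, extended linearly; $(k\,k\!-\!1\cdots1)$ is the cycle $k\to k-1\to\cdots\to1\to k$. $T_S$ is the partial transpose (with respect to a fixed orthonormal basis) on all tensor factors in $S$, and $X^T$ is the transpose in that basis. $\operatorname{tr}_{\{1,\dots,k\}\setminus\{k\}}$ is the partial trace over all tensor factors except the $k$-th. *)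

theory Defs
  imports "Jordan_Normal_Form.Matrix"
begin

text \<open>Operators on the k-fold tensor power of C^d, with tensor factors numbered 1..k,
  are represented by their matrix entries with respect to the product basis.
  Basis vectors of the tensor power are indexed by multi-indices, i.e. extensional
  functions from {1..k} to {0..<d}.\<close>

type_synonym tensor_op = "(nat \<Rightarrow> nat) \<Rightarrow> (nat \<Rightarrow> nat) \<Rightarrow> complex"

definition multi_idx :: "nat \<Rightarrow> nat set \<Rightarrow> (nat \<Rightarrow> nat) set" where
  "multi_idx d I = PiE I (\<lambda>_. {..<d})"

definition tensor_mats :: "nat \<Rightarrow> (nat \<Rightarrow> complex mat) \<Rightarrow> tensor_op" where
  "tensor_mats k X i j = (\<Prod>a\<in>{1..k}. X a $$ (i a, j a))"

text \<open>Permutation operator: sigma maps the basis vector e_j to e_(j o inv sigma),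
  i.e. slot a receives the vector from slot inv sigma a.\<close>
definition perm_op :: "nat \<Rightarrow> (nat \<Rightarrow> nat) \<Rightarrow> tensor_op" where
  "perm_op k sg i j = (if i = restrict (\<lambda>a. j (Hilbert_Choice.inv sg a)) {1..k} then 1 else 0)"

definition down_cycle :: "nat \<Rightarrow> nat \<Rightarrow> nat" where
  "down_cycle k a = (if a = 1 then k else if 2 \<le> a \<and> a \<le> k then a - 1 else a)"

definition op_mult :: "nat \<Rightarrow> nat \<Rightarrow> tensor_op \<Rightarrow> tensor_op \<Rightarrow> tensor_op" where
  "op_mult d k A B i j = (\<Sum>m\<in>multi_idx d {1..k}. A i m * B m j)"

definition partial_transpose :: "nat set \<Rightarrow> tensor_op \<Rightarrow> tensor_op" where
  "partial_transpose S A i j =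
     A (\<lambda>a. if a \<in> S then j a else i a) (\<lambda>a. if a \<in> S then i a else j a)"

definition ptrace_keep_last :: "nat \<Rightarrow> nat \<Rightarrow> tensor_op \<Rightarrow> complex mat" where
  "ptrace_keep_last d k A = mat d d (\<lambda>(p, q).
     \<Sum>m\<in>multi_idx d ({1..k} - {k}). A (m(k := p)) (m(k := q)))"

end

theory Submission
  imports Defs
begin

(* The partial transpose exchanges the row and column index of every slot in S, so an entry of
   (k k-1 ... 1)^{T_S} (X_1 (x) ... (x) X_k), traced over the first k-1 slots, is a sum of products
   X_1'(r_1, c_1) ... X_{k-1}'(r_{k-1}, c_{k-1}) X_k(z, q) subject to c_a = r_{a+1}: the indices
   r_1, ..., r_{k-1} and the last column index form a walk, and summing over walks gives an entry
   of X_1' ... X_{k-1}'.  The cycle closes through slot k, which pins the walk to start at p and end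
   at z if k is not in S, and to run from z to p if k is in S; in the latter case the product is
   read transposed, which gives Y_{k-1} ... Y_1. *)

definition up_cycle :: "nat \<Rightarrow> nat \<Rightarrow> nat" where
  "up_cycle k a = (if a = k then 1 else if 1 \<le> a \<and> a < k then Suc a else a)"

lemma inv_down_cycle:
  assumes "1 \<le> k"
  shows "Hilbert_Choice.inv (down_cycle k) = up_cycle k"
  by (rule inv_equality) (use assms in \<open>auto simp: down_cycle_def up_cycle_def\<close>)

lemma perm_op_eq_indicator:
  assumes "i \<in> extensional {1..k}"
  shows "perm_op k \<sigma> i j = (if \<forall>a\<in>{1..k}. i a = j (Hilbert_Choice.inv \<sigma> a) then 1 else 0)"
  using assms by (auto simp: perm_op_def fun_eq_iff extensional_def)

definition partial_transpose_perm_support ::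
    "nat set \<Rightarrow> (nat \<Rightarrow> nat) \<Rightarrow> nat \<Rightarrow> (nat \<Rightarrow> nat) \<Rightarrow> (nat \<Rightarrow> nat) \<Rightarrow> bool" where
  "partial_transpose_perm_support S \<tau> k i j \<longleftrightarrow>
     (\<forall>a\<in>{1..k}. (if a \<in> S then j a else i a) = (if \<tau> a \<in> S then i (\<tau> a) else j (\<tau> a)))"

lemma partial_transpose_perm_op:
  assumes "S \<subseteq> {1..k}" "i \<in> extensional {1..k}"
  shows "partial_transpose S (perm_op k \<sigma>) i j
    = (if partial_transpose_perm_support S (Hilbert_Choice.inv \<sigma>) k i j then 1 else 0)"
proof -
  have "(\<lambda>a. if a \<in> S then j a else i a) \<in> extensional {1..k}"
    using assms by (auto simp: extensional_def)
  then show ?thesis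
    unfolding partial_transpose_def partial_transpose_perm_support_def
    by (subst perm_op_eq_indicator) auto
qed

lemma index_ptrace_partial_transpose_perm:
  assumes "1 \<le> k" "S \<subseteq> {1..k}" "p < d" "q < d"
  shows "ptrace_keep_last d k
      (op_mult d k (partial_transpose S (perm_op k \<sigma>)) (tensor_mats k X)) $$ (p, q)
    = (\<Sum>(m, n) \<in> multi_idx d ({1..k} - {k}) \<times> multi_idx d {1..k}.
         if partial_transpose_perm_support S (Hilbert_Choice.inv \<sigma>) k (m(k := p)) n
         then \<Prod>a\<in>{1..k}. X a $$ (n a, (m(k := q)) a) else 0)"
    (is "?lhs = _")
proof -
  have ext: "m(k := p) \<in> extensional {1..k}" if "m \<in> multi_idx d ({1..k} - {k})" for m
    using that assms(1) by (auto simp: multi_idx_def PiE_def extensional_def)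
  have "?lhs = (\<Sum>m\<in>multi_idx d ({1..k} - {k}). \<Sum>n\<in>multi_idx d {1..k}.
      partial_transpose S (perm_op k \<sigma>) (m(k := p)) n * (\<Prod>a\<in>{1..k}. X a $$ (n a, (m(k := q)) a)))"
    using assms(3,4) by (simp add: ptrace_keep_last_def op_mult_def tensor_mats_def)
  also have "\<dots> = (\<Sum>(m, n) \<in> multi_idx d ({1..k} - {k}) \<times> multi_idx d {1..k}.
         if partial_transpose_perm_support S (Hilbert_Choice.inv \<sigma>) k (m(k := p)) n
         then \<Prod>a\<in>{1..k}. X a $$ (n a, (m(k := q)) a) else 0)"
    unfolding sum.cartesian_product[symmetric]
    by (intro sum.cong refl) (simp add: partial_transpose_perm_op[OF assms(2) ext])
  finally show ?thesis .
qed

lemma foldr_mult_carrier_mat: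
  fixes B :: "'b \<Rightarrow> 'a :: semiring_1 mat"
  assumes "\<forall>a\<in>set xs. B a \<in> carrier_mat d d" "C \<in> carrier_mat d d"
  shows "foldr (\<lambda>a acc. B a * acc) xs C \<in> carrier_mat d d"
  using assms by (induction xs) auto

lemma foldr_mult_mat:
  fixes B :: "'b \<Rightarrow> 'a :: semiring_1 mat"
  assumes "\<forall>a\<in>set xs. B a \<in> carrier_mat d d" "C \<in> carrier_mat d d"
  shows "foldr (\<lambda>a acc. B a * acc) xs C = foldr (\<lambda>a acc. B a * acc) xs (1\<^sub>m d) * C"
  using assms(1)
proof (induction xs)
  case (Cons a xs)
  then have "B a \<in> carrier_mat d d" "foldr (\<lambda>a acc. B a * acc) xs (1\<^sub>m d) \<in> carrier_mat d d"
    by (auto intro: foldr_mult_carrier_mat)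
  with Cons assms(2) show ?case by (simp add: assoc_mult_mat[of _ d d _ d _ d])
qed (use assms(2) in \<open>simp add: left_mult_one_mat\<close>)

lemma transpose_foldr_mult:
  fixes B :: "'b \<Rightarrow> 'a :: comm_semiring_1 mat"
  assumes "\<forall>a\<in>set xs. B a \<in> carrier_mat d d"
  shows "transpose_mat (foldr (\<lambda>a acc. B a * acc) xs (1\<^sub>m d))
    = foldr (\<lambda>a acc. transpose_mat (B a) * acc) (rev xs) (1\<^sub>m d)"
  using assms
proof (induction xs)
  case (Cons x xs)
  let ?Bt = "\<lambda>a. transpose_mat (B a)"
  have Bx: "B x \<in> carrier_mat d d" and Bxs: "\<forall>a\<in>set xs. B a \<in> carrier_mat d d"
    using Cons.prems by auto
  have "transpose_mat (foldr (\<lambda>a acc. B a * acc) (x # xs) (1\<^sub>m d))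
      = transpose_mat (foldr (\<lambda>a acc. B a * acc) xs (1\<^sub>m d)) * ?Bt x"
    using Bx Bxs by (simp add: transpose_mult[of _ d d _ d] foldr_mult_carrier_mat)
  also have "\<dots> = foldr (\<lambda>a acc. ?Bt a * acc) (rev xs) (1\<^sub>m d) * ?Bt x"
    using Cons.IH Bxs by simp
  also have "\<dots> = foldr (\<lambda>a acc. ?Bt a * acc) (rev xs) (?Bt x)"
    using Bx Bxs by (intro foldr_mult_mat[symmetric]) auto
  also have "\<dots> = foldr (\<lambda>a acc. ?Bt a * acc) (rev (x # xs)) (1\<^sub>m d)"
    using Bx by simp
  finally show ?case .
qed simp

definition walks :: "nat \<Rightarrow> nat \<Rightarrow> nat \<Rightarrow> nat \<Rightarrow> (nat \<Rightarrow> nat) set" where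
  "walks d n s e = {\<pi> \<in> PiE {1..n} (\<lambda>_. {..<d}). \<pi> 1 = s \<and> \<pi> n = e}"

lemma finite_walks: "finite (walks d n s e)"
  by (rule finite_subset[of _ "PiE {1..n} (\<lambda>_. {..<d})"]) (auto simp: walks_def intro: finite_PiE)

lemma sum_walks_Suc:
  assumes "1 \<le> n" "e < d"
  shows "(\<Sum>\<pi>\<in>walks d (Suc n) s e. F \<pi>) = (\<Sum>y<d. \<Sum>\<pi>\<in>walks d n s y. F (\<pi>(Suc n := e)))"
proof -
  have "(\<Sum>\<pi>\<in>walks d (Suc n) s e. F \<pi>)
      = (\<Sum>(y, \<pi>)\<in>Sigma {..<d} (\<lambda>y. walks d n s y). F (\<pi>(Suc n := e)))"
  proof (rule sum.reindex_bij_witness[where i = "\<lambda>(y, \<pi>). \<pi>(Suc n := e)"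
        and j = "\<lambda>\<pi>. (\<pi> n, restrict \<pi> {1..n})"])
    fix \<pi> assume \<pi>: "\<pi> \<in> walks d (Suc n) s e"
    then have "(restrict \<pi> {1..n})(Suc n := e) = \<pi>"
      by (auto simp: walks_def PiE_iff extensional_def fun_eq_iff)
    then show "(case (\<pi> n, restrict \<pi> {1..n}) of (y, \<pi>) \<Rightarrow> \<pi>(Suc n := e)) = \<pi>"
      "(case (\<pi> n, restrict \<pi> {1..n}) of (y, \<pi>) \<Rightarrow> F (\<pi>(Suc n := e))) = F \<pi>"
      by simp_all
    show "(\<pi> n, restrict \<pi> {1..n}) \<in> Sigma {..<d} (walks d n s)"
      using \<pi> assms by (auto simp: walks_def PiE_iff extensional_def)
  qed (use assms in \<open>auto simp: walks_def PiE_iff extensional_def\<close>)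
  also have "\<dots> = (\<Sum>y<d. \<Sum>\<pi>\<in>walks d n s y. F (\<pi>(Suc n := e)))"
    by (simp add: sum.Sigma finite_walks)
  finally show ?thesis .
qed

lemma walks_one: "walks d 1 s e = (if s = e \<and> s < d then {(\<lambda>_. undefined)(1 := s)} else {})"
  by (auto simp: walks_def PiE_iff extensional_def fun_eq_iff)

lemma index_foldr_mult_walks:
  fixes B :: "nat \<Rightarrow> 'a :: comm_semiring_1 mat"
  assumes "1 \<le> n" "\<forall>a\<in>{1..<n}. B a \<in> carrier_mat d d" "s < d" "e < d"
  shows "foldr (\<lambda>a acc. B a * acc) [1..<n] (1\<^sub>m d) $$ (s, e)
    = (\<Sum>\<pi>\<in>walks d n s e. \<Prod>a\<in>{1..<n}. B a $$ (\<pi> a, \<pi> (Suc a)))"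
  using assms(1,2,4)
proof (induction n arbitrary: e rule: nat_induct_at_least)
  case base
  then show ?case using assms(3) walks_one[of d s e] by simp
next
  case (Suc n)
  let ?P = "foldr (\<lambda>a acc. B a * acc) [1..<n] (1\<^sub>m d)"
  have Bn: "B n \<in> carrier_mat d d" using Suc by simp
  have P: "?P \<in> carrier_mat d d" using Suc by (intro foldr_mult_carrier_mat) auto
  have "foldr (\<lambda>a acc. B a * acc) [1..<Suc n] (1\<^sub>m d) = foldr (\<lambda>a acc. B a * acc) [1..<n] (B n)"
    using Suc.hyps Bn by simp
  also have "\<dots> = ?P * B n"
    using Suc.prems(1) Bn by (intro foldr_mult_mat) auto
  finally have "foldr (\<lambda>a acc. B a * acc) [1..<Suc n] (1\<^sub>m d) = ?P * B n" .
  then have "foldr (\<lambda>a acc. B a * acc) [1..<Suc n] (1\<^sub>m d) $$ (s, e)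
      = (\<Sum>y<d. ?P $$ (s, y) * B n $$ (y, e))"
    using P Bn assms(3) Suc.prems(2) by (simp add: scalar_prod_def lessThan_atLeast0)
  also have "\<dots> = (\<Sum>y<d. \<Sum>\<pi>\<in>walks d n s y. (\<Prod>a\<in>{1..<n}. B a $$ (\<pi> a, \<pi> (Suc a))) * B n $$ (y, e))"
    using Suc by (simp add: sum_distrib_right)
  also have "\<dots> = (\<Sum>y<d. \<Sum>\<pi>\<in>walks d n s y.
      \<Prod>a\<in>{1..<Suc n}. B a $$ ((\<pi>(Suc n := e)) a, (\<pi>(Suc n := e)) (Suc a)))"
  proof (intro sum.cong refl)
    fix y \<pi> assume "\<pi> \<in> walks d n s y"
    then have "\<pi> n = y" by (simp add: walks_def)
    then show "(\<Prod>a\<in>{1..<n}. B a $$ (\<pi> a, \<pi> (Suc a))) * B n $$ (y, e)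
      = (\<Prod>a\<in>{1..<Suc n}. B a $$ ((\<pi>(Suc n := e)) a, (\<pi>(Suc n := e)) (Suc a)))"
      using Suc.hyps by (simp add: prod.atLeastLessThan_Suc)
  qed
  also have "\<dots> = (\<Sum>\<pi>\<in>walks d (Suc n) s e. \<Prod>a\<in>{1..<Suc n}. B a $$ (\<pi> a, \<pi> (Suc a)))"
    by (simp only: sum_walks_Suc[OF Suc.hyps Suc.prems(2)])
  finally show ?case .
qed

definition transpose_on :: "nat set \<Rightarrow> (nat \<Rightarrow> 'a mat) \<Rightarrow> nat \<Rightarrow> 'a mat" where
  "transpose_on S X a = (if a \<in> S then transpose_mat (X a) else X a)"

(* Slot a < k of the pair (m, n) carries X a $$ (n a, m a) = transpose_on S X a $$ (\<pi> a, \<pi> (Suc a)),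
   and slot k carries X k $$ (z, q). *)
definition walk_indices :: "nat set \<Rightarrow> nat \<Rightarrow> nat \<times> (nat \<Rightarrow> nat) \<Rightarrow> (nat \<Rightarrow> nat) \<times> (nat \<Rightarrow> nat)" where
  "walk_indices S k = (\<lambda>(z, \<pi>).
     (restrict (\<lambda>a. if a \<in> S then \<pi> a else \<pi> (Suc a)) ({1..k} - {k}),
      restrict (\<lambda>a. if a = k then z else if a \<in> S then \<pi> (Suc a) else \<pi> a) {1..k}))"

lemma bij_betw_walk_indices:
  assumes k: "2 \<le> k" and p: "p < d"
  shows "bij_betw (walk_indices S k)
    (Sigma {..<d} (\<lambda>z. walks d k (if k \<in> S then z else p) (if k \<in> S then p else z)))
    {(m, n) \<in> multi_idx d ({1..k} - {k}) \<times> multi_idx d {1..k}.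
       partial_transpose_perm_support S (up_cycle k) k (m(k := p)) n}"
    (is "bij_betw _ ?W ?B")
proof -
  let ?e = "\<lambda>z. if k \<in> S then p else z"
  let ?\<psi> = "\<lambda>(m, n).
    (n k, restrict (\<lambda>a. if a = k then ?e (n k) else if a \<in> S then m a else n a) {1..k})"
  have support: "(if a \<in> S then n a else (m(k := p)) a)
      = (if up_cycle k a \<in> S then (m(k := p)) (up_cycle k a) else n (up_cycle k a))"
    if "(m, n) \<in> ?B" "a \<in> {1..k}" for m n a
    using that unfolding partial_transpose_perm_support_def by blast
  have "walk_indices S k \<in> ?W \<rightarrow> ?B"
    using k p by (auto simp: walk_indices_def partial_transpose_perm_support_def walks_def PiE_iff
        multi_idx_def up_cycle_def split: if_split_asm)
  moreover have "?\<psi> \<in> ?B \<rightarrow> ?W"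
  proof
    fix x assume x: "x \<in> ?B"
    obtain m n where mn: "x = (m, n)" by (cases x)
    then show "?\<psi> x \<in> ?W"
      using x support[of m n k] k p by (auto simp: walks_def up_cycle_def multi_idx_def PiE_iff)
  qed
  moreover have "?\<psi> (walk_indices S k y) = y" if "y \<in> ?W" for y
    using that k by (auto simp: walk_indices_def walks_def PiE_iff extensional_def fun_eq_iff)
  moreover have "walk_indices S k (?\<psi> x) = x" if x: "x \<in> ?B" for x
  proof -
    obtain m n where mn: "x = (m, n)" by (cases x)
    have "fst (walk_indices S k (?\<psi> x)) a = m a \<and> snd (walk_indices S k (?\<psi> x)) a = n a" for a
      using x support[of m n a] k
      by (cases "a \<in> {1..k}")
        (auto simp: mn walk_indices_def up_cycle_def multi_idx_def PiE_iff extensional_def)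
    then show ?thesis by (simp add: mn prod_eq_iff fun_eq_iff)
  qed
  ultimately show ?thesis by (rule bij_betwI)
qed

lemma prod_walk_indices:
  assumes k: "2 \<le> k" and X: "\<And>a. a \<in> {1..k} \<Longrightarrow> X a \<in> carrier_mat d d"
    and \<pi>: "\<pi> \<in> walks d k s e" and "(m, n) = walk_indices S k (z, \<pi>)"
  shows "(\<Prod>a\<in>{1..k}. X a $$ (n a, (m(k := q)) a))
    = (\<Prod>a\<in>{1..<k}. transpose_on S X a $$ (\<pi> a, \<pi> (Suc a))) * X k $$ (z, q)"
proof -
  have "{1..k} = insert k {1..<k}" using k by auto
  moreover have "X a $$ (n a, (m(k := q)) a) = transpose_on S X a $$ (\<pi> a, \<pi> (Suc a))"
    if "a \<in> {1..<k}" for a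
    using that \<pi> X[of a] assms(4) by (auto simp: walk_indices_def transpose_on_def walks_def PiE_iff)
  ultimately show ?thesis
    using assms(4) by (simp add: walk_indices_def mult.commute)
qed

lemma sum_up_cycle_support_eq_sum_walks:
  assumes k: "2 \<le> k" and X: "\<And>a. a \<in> {1..k} \<Longrightarrow> X a \<in> carrier_mat d d" and p: "p < d"
  shows "(\<Sum>(m, n) \<in> multi_idx d ({1..k} - {k}) \<times> multi_idx d {1..k}.
           if partial_transpose_perm_support S (up_cycle k) k (m(k := p)) n
           then \<Prod>a\<in>{1..k}. X a $$ (n a, (m(k := q)) a) else 0)
    = (\<Sum>z<d. \<Sum>\<pi>\<in>walks d k (if k \<in> S then z else p) (if k \<in> S then p else z).
         (\<Prod>a\<in>{1..<k}. transpose_on S X a $$ (\<pi> a, \<pi> (Suc a))) * X k $$ (z, q))"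
    (is "?lhs = _")
proof -
  let ?MN = "multi_idx d ({1..k} - {k}) \<times> multi_idx d {1..k}"
  let ?B = "{(m, n) \<in> ?MN. partial_transpose_perm_support S (up_cycle k) k (m(k := p)) n}"
  let ?W = "Sigma {..<d} (\<lambda>z. walks d k (if k \<in> S then z else p) (if k \<in> S then p else z))"
  let ?G = "\<lambda>(m, n). \<Prod>a\<in>{1..k}. X a $$ (n a, (m(k := q)) a)"
  have fin: "finite ?MN"
    by (simp add: multi_idx_def finite_PiE)
  have "?B = {x \<in> ?MN. partial_transpose_perm_support S (up_cycle k) k ((fst x)(k := p)) (snd x)}"
    by auto
  then have "sum ?G ?B = (\<Sum>x\<in>?MN.
      if partial_transpose_perm_support S (up_cycle k) k ((fst x)(k := p)) (snd x) then ?G x else 0)"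
    by (simp only: sum.inter_filter[OF fin])
  then have "?lhs = sum ?G ?B"
    by (simp only: case_prod_unfold)
  also have "\<dots> = (\<Sum>y\<in>?W. ?G (walk_indices S k y))"
    by (rule sum.reindex_bij_betw[OF bij_betw_walk_indices[OF k p], symmetric])
  also have "\<dots> = (\<Sum>(z, \<pi>)\<in>?W. (\<Prod>a\<in>{1..<k}. transpose_on S X a $$ (\<pi> a, \<pi> (Suc a))) * X k $$ (z, q))"
  proof (intro sum.cong refl)
    fix y assume "y \<in> ?W"
    then obtain z \<pi> where y: "y = (z, \<pi>)"
      and \<pi>: "\<pi> \<in> walks d k (if k \<in> S then z else p) (if k \<in> S then p else z)"
      by auto
    obtain m n where mn: "walk_indices S k (z, \<pi>) = (m, n)"
      by (cases "walk_indices S k (z, \<pi>)")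
    show "?G (walk_indices S k y)
      = (case y of (z, \<pi>) \<Rightarrow> (\<Prod>a\<in>{1..<k}. transpose_on S X a $$ (\<pi> a, \<pi> (Suc a))) * X k $$ (z, q))"
      using prod_walk_indices[OF k X \<pi> mn[symmetric]] by (simp add: y mn)
  qed
  also have "\<dots> = (\<Sum>z<d. \<Sum>\<pi>\<in>walks d k (if k \<in> S then z else p) (if k \<in> S then p else z).
         (\<Prod>a\<in>{1..<k}. transpose_on S X a $$ (\<pi> a, \<pi> (Suc a))) * X k $$ (z, q))"
    by (simp add: sum.Sigma finite_walks)
  finally show ?thesis .
qed

lemma index_ptrace_partial_transpose_down_cycle:
  assumes k: "2 \<le> k" and X: "\<And>a. a \<in> {1..k} \<Longrightarrow> X a \<in> carrier_mat d d"
    and S: "S \<subseteq> {1..k}" and p: "p < d" and q: "q < d"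
  shows "ptrace_keep_last d k
      (op_mult d k (partial_transpose S (perm_op k (down_cycle k))) (tensor_mats k X)) $$ (p, q)
    = (\<Sum>z<d. foldr (\<lambda>a acc. transpose_on S X a * acc) [1..<k] (1\<^sub>m d)
          $$ (if k \<in> S then z else p, if k \<in> S then p else z) * X k $$ (z, q))"
    (is "?lhs = _")
proof -
  let ?s = "\<lambda>z. if k \<in> S then z else p" and ?e = "\<lambda>z. if k \<in> S then p else z"
  let ?P = "foldr (\<lambda>a acc. transpose_on S X a * acc) [1..<k] (1\<^sub>m d)"
  have walk_sum: "?P $$ (?s z, ?e z)
      = (\<Sum>\<pi>\<in>walks d k (?s z) (?e z). \<Prod>a\<in>{1..<k}. transpose_on S X a $$ (\<pi> a, \<pi> (Suc a)))"
    if "z < d" for z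
    using that k X p by (intro index_foldr_mult_walks) (auto simp: transpose_on_def)
  have "?lhs = (\<Sum>(m, n) \<in> multi_idx d ({1..k} - {k}) \<times> multi_idx d {1..k}.
         if partial_transpose_perm_support S (up_cycle k) k (m(k := p)) n
         then \<Prod>a\<in>{1..k}. X a $$ (n a, (m(k := q)) a) else 0)"
    using index_ptrace_partial_transpose_perm[of k S p d q "down_cycle k" X] inv_down_cycle[of k] k S p q
    by simp
  also have "\<dots> = (\<Sum>z<d. \<Sum>\<pi>\<in>walks d k (?s z) (?e z).
         (\<Prod>a\<in>{1..<k}. transpose_on S X a $$ (\<pi> a, \<pi> (Suc a))) * X k $$ (z, q))"
    by (rule sum_up_cycle_support_eq_sum_walks[OF k X p])
  also have "\<dots> = (\<Sum>z<d. ?P $$ (?s z, ?e z) * X k $$ (z, q))"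
    by (intro sum.cong refl) (simp only: sum_distrib_right[symmetric] walk_sum lessThan_iff)
  finally show ?thesis .
qed

lemma ptrace_partial_transpose_down_cycle:
  assumes "2 \<le> k" "\<And>a. a \<in> {1..k} \<Longrightarrow> X a \<in> carrier_mat d d" "S \<subseteq> {1..k}"
  shows "ptrace_keep_last d k
      (op_mult d k (partial_transpose S (perm_op k (down_cycle k))) (tensor_mats k X))
    = (if k \<in> S then transpose_mat (foldr (\<lambda>a acc. transpose_on S X a * acc) [1..<k] (1\<^sub>m d)) * X k
       else foldr (\<lambda>a acc. transpose_on S X a * acc) [1..<k] (1\<^sub>m d) * X k)"
    (is "?L = ?R")
proof -
  let ?P = "foldr (\<lambda>a acc. transpose_on S X a * acc) [1..<k] (1\<^sub>m d)"
  have P: "?P \<in> carrier_mat d d"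
    using assms(2) by (intro foldr_mult_carrier_mat) (auto simp: transpose_on_def)
  have Xk: "X k \<in> carrier_mat d d"
    using assms(1,2) by simp
  show ?thesis
  proof (rule eq_matI)
    fix p q assume "p < dim_row ?R" and "q < dim_col ?R"
    then have p: "p < d" and q: "q < d"
      using P Xk by (auto split: if_split_asm)
    then show "?L $$ (p, q) = ?R $$ (p, q)"
      using index_ptrace_partial_transpose_down_cycle[OF assms p q] P Xk
      by (simp add: scalar_prod_def lessThan_atLeast0)
  qed (use P Xk in \<open>auto simp: ptrace_keep_last_def\<close>)
qed

theorem proposition4:
  fixes d k :: nat and X :: "nat \<Rightarrow> complex mat" and S :: "nat set"
  assumes "k \<ge> 2"
    and "\<And>i. i \<in> {1..k} \<Longrightarrow> X i \<in> carrier_mat d d"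
    and "S \<subseteq> {1..k}"
  shows "ptrace_keep_last d k
           (op_mult d k (partial_transpose S (perm_op k (down_cycle k))) (tensor_mats k X))
         = (let X' = (\<lambda>i. if i \<in> S then transpose_mat (X i) else X i);
                Y  = (\<lambda>i. if i \<in> S then X i else transpose_mat (X i))
            in if k \<notin> S then foldr (\<lambda>i acc. X' i * acc) [1..<k] (X k)
               else foldr (\<lambda>i acc. Y i * acc) (rev [1..<k]) (X k))"
proof -
  let ?X' = "transpose_on S X"
  have X': "\<forall>a\<in>set [1..<k]. ?X' a \<in> carrier_mat d d"
    using assms(2) by (auto simp: transpose_on_def)
  have Xk: "X k \<in> carrier_mat d d"
    using assms(1,2) by simp
  have X'_eq: "(\<lambda>i. if i \<in> S then transpose_mat (X i) else X i) = ?X'"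
    and Y_eq: "(\<lambda>i. if i \<in> S then X i else transpose_mat (X i)) = (\<lambda>i. transpose_mat (?X' i))"
    by (simp_all add: transpose_on_def fun_eq_iff)
  have "foldr (\<lambda>i acc. transpose_mat (?X' i) * acc) (rev [1..<k]) (X k)
      = transpose_mat (foldr (\<lambda>i acc. ?X' i * acc) [1..<k] (1\<^sub>m d)) * X k"
    using X' Xk foldr_mult_mat[of "rev [1..<k]" "\<lambda>i. transpose_mat (?X' i)" d "X k"]
    unfolding transpose_foldr_mult[OF X'] by simp
  then show ?thesis
    using ptrace_partial_transpose_down_cycle[OF assms] foldr_mult_mat[OF X' Xk]
    unfolding Let_def X'_eq Y_eq by simp
qed

end
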